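(* The representativity metrics $\rho_1$ and $\rho_\infty$, viewed as set functions $\mathbf{S} \mapsto \rho_1(d)$ and $\mathbf{S}\mapsto\rho_\infty(d)$ on (nonempty) summaries $\mathbf{S}\subseteq\mathbf{W}$ for a fixed workload $\mathbf{W}$ and target distribution $d$, are in general neither monotone nor submodular: there exist a workload and target distribution for which each of $\rho_1$ and $\rho_\infty$ fails to be monotone and fails to be submodular.
   Context: A workload $\mathbf{W}$ is a finite multiset of queries; a summary is $\mathbf{S}\subseteq\mathbf{W}$. There is a finite set $\mathbf{F}$ of features; for each query $q$ and feature $f$, $f(q)$ is a finite multiset of tokens. $f(\mathbf{S}) = \biguplus_{q\in\mathbf{S}} f(q)$, $\mathrm{dom}(\mathbf{S},f)$ is the set of distinct tokens in $f(\mathbf{S})$, $m_{\mathbf{S}}(t,f)$ the multiplicity of $t$ in $f(\mathbf{S})$, $\|\mathbf{S}\| = \sum_{q\in\mathbf{S}}\sum_f|f(q)|$, and $p_{\mathbf{S}}(t) = m_{\mathbf{S}}(t,f)/\|\mathbf{S}\|$ (tokens of distinct features regarded as distinct). For a target distribution $d$ on tokens of $\mathbf{W}$: $\rho_1(d) = 1 - \frac12\sum_f\sum_{t\in\mathrm{dom}(\mathbf{W},f)}|p_{\mathbf{S}}(t)-d(t)|$, $\rho_\infty(d) = 1-\max_f\max_{t\in\mathrm{dom}(\mathbf{W},f)}|p_{\mathbf{S}}(t)-d(t)|$. A set function $g$ is monotone if $A\subseteq B$ implies $g(A)\le g(B)$, and submodular if $g(A)+g(B)\ge g(A\cup B)+g(A\cap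 B)$. *)

theory Defs
  imports Complex_Main "HOL-Library.Multiset"
begin

text \<open>A feature is an index f in the finite set F; feat f q is the finite multiset
  of tokens f(q).  A workload W is a finite multiset of queries, a summary is a
  sub-multiset S of W.  Tokens of distinct features are regarded as distinct,
  so a token is a pair (f, t).\<close>

type_synonym query = nat
type_synonym feature = nat
type_synonym token = nat
type_synonym featfun = "feature \<Rightarrow> query \<Rightarrow> token multiset"

definition featS :: "featfun \<Rightarrow> query multiset \<Rightarrow> feature \<Rightarrow> token multiset" where
  "featS feat S f = \<Sum>\<^sub># (image_mset (feat f) S)"

definition tokdom :: "featfun \<Rightarrow> query multiset \<Rightarrow> feature \<Rightarrow> token set" where
  "tokdom feat S f = set_mset (featS feat S f)"

definition mult_tok :: "featfun \<Rightarrow> query multiset \<Rightarrow> token \<Rightarrow> feature \<Rightarrow> nat" where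
  "mult_tok feat S t f = count (featS feat S f) t"

definition norm_sum :: "feature set \<Rightarrow> featfun \<Rightarrow> query multiset \<Rightarrow> nat" where
  "norm_sum F feat S = (\<Sum>q\<in>#S. \<Sum>f\<in>F. size (feat f q))"

definition p_tok :: "feature set \<Rightarrow> featfun \<Rightarrow> query multiset \<Rightarrow> feature \<Rightarrow> token \<Rightarrow> real" where
  "p_tok F feat S f t = real (mult_tok feat S t f) / real (norm_sum F feat S)"

definition tokens :: "feature set \<Rightarrow> featfun \<Rightarrow> query multiset \<Rightarrow> (feature \<times> token) set" where
  "tokens F feat W = Sigma F (tokdom feat W)"

definition target_dist :: "feature set \<Rightarrow> featfun \<Rightarrow> query multiset \<Rightarrow> (feature \<times> token \<Rightarrow> real) \<Rightarrow> bool" where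
  "target_dist F feat W d \<longleftrightarrow> (\<forall>x\<in>tokens F feat W. d x \<ge> 0) \<and> (\<Sum>x\<in>tokens F feat W. d x) = 1"

definition rho1 :: "feature set \<Rightarrow> featfun \<Rightarrow> query multiset \<Rightarrow> (feature \<times> token \<Rightarrow> real) \<Rightarrow> query multiset \<Rightarrow> real" where
  "rho1 F feat W d S = 1 - (1/2) * (\<Sum>f\<in>F. \<Sum>t\<in>tokdom feat W f. \<bar>p_tok F feat S f t - d (f, t)\<bar>)"

definition rhoinf :: "feature set \<Rightarrow> featfun \<Rightarrow> query multiset \<Rightarrow> (feature \<times> token \<Rightarrow> real) \<Rightarrow> query multiset \<Rightarrow> real" where
  "rhoinf F feat W d S = 1 - Max ((\<lambda>(f, t). \<bar>p_tok F feat S f t - d (f, t)\<bar>) ` tokens F feat W)"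

definition monotone_summ :: "query multiset \<Rightarrow> (query multiset \<Rightarrow> real) \<Rightarrow> bool" where
  "monotone_summ W g \<longleftrightarrow> (\<forall>A B. A \<noteq> {#} \<and> A \<subseteq># B \<and> B \<subseteq># W \<longrightarrow> g A \<le> g B)"

definition submodular_summ :: "query multiset \<Rightarrow> (query multiset \<Rightarrow> real) \<Rightarrow> bool" where
  "submodular_summ W g \<longleftrightarrow> (\<forall>A B. A \<subseteq># W \<and> B \<subseteq># W \<and> A \<inter># B \<noteq> {#} \<longrightarrow>
       g A + g B \<ge> g (A \<union># B) + g (A \<inter># B))"

end

theory Submission
  imports Defs
begin

(* Take one feature mapping each query to itself as its only token, the workload
   W = {0, 0, 1} and the target distribution concentrated on the token 0.  On a nonempty
   summary both deviations |p(0) - 1| and |p(1)| equal the share of 1s, so rho_1 and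
   rho_inf both reduce to the share of 0s in the summary.  That share drops from 1 to 1/2
   when 1 is added to {0}, and for A = {0, 1}, B = {0, 0} it gives
   rho(A) + rho(B) = 1/2 + 1 < 2/3 + 1 = rho(A \<union> B) + rho(A \<inter> B). *)

definition identity_feature :: featfun where
  "identity_feature f q = {#q#}"

definition frequency :: "query \<Rightarrow> query multiset \<Rightarrow> real" where
  "frequency t S = real (count S t) / real (size S)"

lemma featS_identity_feature: "featS identity_feature S f = S"
  by (induction S) (auto simp: featS_def identity_feature_def)

lemma norm_sum_identity_feature: "norm_sum {f} identity_feature S = size S"
  by (induction S) (auto simp: norm_sum_def identity_feature_def)

lemma p_tok_identity_feature: "p_tok {f} identity_feature S f' t = frequency t S"
  by (simp add: p_tok_def mult_tok_def featS_identity_feature norm_sum_identity_feature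
      frequency_def)

lemma size_eq_count_add_count:
  assumes "set_mset S \<subseteq> {a, b}" "a \<noteq> b"
  shows "size S = count S a + count S b"
  using assms by (induction S) auto

lemma frequency_complement:
  assumes "set_mset S \<subseteq> {a, b}" "a \<noteq> b" "S \<noteq> {#}"
  shows "frequency a S = 1 - frequency b S"
proof -
  have "frequency a S + frequency b S = real (count S a + count S b) / real (size S)"
    by (simp add: frequency_def add_divide_distrib)
  also have "\<dots> = 1"
    using size_eq_count_add_count[OF assms(1,2), symmetric] assms(3) by simp
  finally show ?thesis by simp
qed

lemma monotone_summ_cong:
  assumes "\<And>S. S \<noteq> {#} \<Longrightarrow> S \<subseteq># W \<Longrightarrow> g S = h S"
  shows "monotone_summ W g \<longleftrightarrow> monotone_summ W h"
proof -
  have agree: "g A = h A \<and> g B = h B" if "A \<noteq> {#}" "A \<subseteq># B" "B \<subseteq># W" for A B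
  proof -
    have "A \<subseteq># W" using that(2,3) by (rule subset_mset.order_trans)
    moreover have "B \<noteq> {#}" using that(1,2) by auto
    ultimately show ?thesis using assms that by simp
  qed
  show ?thesis
    unfolding monotone_summ_def by (intro iff_allI imp_cong[OF refl]) (auto simp: agree)
qed

lemma submodular_summ_cong:
  assumes "\<And>S. S \<noteq> {#} \<Longrightarrow> S \<subseteq># W \<Longrightarrow> g S = h S"
  shows "submodular_summ W g \<longleftrightarrow> submodular_summ W h"
proof -
  have agree: "g A = h A \<and> g B = h B \<and>
      g (A \<union># B) = h (A \<union># B) \<and> g (A \<inter># B) = h (A \<inter># B)"
    if "A \<subseteq># W" "B \<subseteq># W" "A \<inter># B \<noteq> {#}" for A B
  proof -
    have "A \<noteq> {#}" "B \<noteq> {#}" using that(3) by auto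
    moreover have "A \<union># B \<noteq> {#}"
      using \<open>A \<noteq> {#}\<close> by (metis subset_mset.sup_ge1 subset_mset.le_zero_eq)
    moreover have "A \<union># B \<subseteq># W" "A \<inter># B \<subseteq># W"
      using that by (auto intro: subset_mset.le_infI1)
    ultimately show ?thesis using assms that by simp
  qed
  show ?thesis
    unfolding submodular_summ_def by (intro iff_allI imp_cong[OF refl]) (auto simp: agree)
qed

lemma not_monotone_summI:
  assumes "A \<noteq> {#}" "A \<subseteq># B" "B \<subseteq># W" "g B < g A"
  shows "\<not> monotone_summ W g"
  using assms unfolding monotone_summ_def by force

lemma not_submodular_summI:
  assumes "A \<subseteq># W" "B \<subseteq># W" "A \<inter># B \<noteq> {#}" "g A + g B < g (A \<union># B) + g (A \<inter># B)"
  shows "\<not> submodular_summ W g"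
  using assms unfolding submodular_summ_def by force

definition example_workload :: "query multiset" where
  "example_workload = {#0, 0, 1#}"

definition point_target :: "token \<Rightarrow> feature \<times> token \<Rightarrow> real" where
  "point_target t = (\<lambda>(f, t'). if t' = t then 1 else 0)"

lemma tokdom_example_workload: "tokdom identity_feature example_workload f = {0, 1}"
  by (auto simp: tokdom_def featS_identity_feature example_workload_def)

lemma tokens_example_workload: "tokens {f} identity_feature example_workload = {(f, 0), (f, 1)}"
  by (auto simp: tokens_def tokdom_example_workload)

lemma target_dist_example: "target_dist {f} identity_feature example_workload (point_target 0)"
  by (simp add: target_dist_def tokens_example_workload point_target_def)

lemma frequency_complement_example:
  assumes "S \<noteq> {#}" "S \<subseteq># example_workload"
  shows "frequency 0 S = 1 - frequency 1 S"
proof (rule frequency_complement)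
  show "set_mset S \<subseteq> {0, 1}"
    using set_mset_mono[OF assms(2)] by (simp add: example_workload_def)
qed (use assms in simp_all)

lemma rho1_example_eq_frequency:
  assumes "S \<noteq> {#}" "S \<subseteq># example_workload"
  shows "rho1 {f} identity_feature example_workload (point_target 0) S = frequency 0 S"
  using frequency_complement_example[OF assms]
  by (simp add: rho1_def tokdom_example_workload p_tok_identity_feature point_target_def
      frequency_def)

lemma rhoinf_example_eq_frequency:
  assumes "S \<noteq> {#}" "S \<subseteq># example_workload"
  shows "rhoinf {f} identity_feature example_workload (point_target 0) S = frequency 0 S"
  using frequency_complement_example[OF assms]
  by (simp add: rhoinf_def tokens_example_workload p_tok_identity_feature point_target_def
      frequency_def)

lemma not_monotone_summ_frequency: "\<not> monotone_summ example_workload (frequency 0)"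
  by (rule not_monotone_summI[of "{#0#}" "{#0, 1#}"])
    (auto simp: example_workload_def frequency_def)

lemma not_submodular_summ_frequency: "\<not> submodular_summ example_workload (frequency 0)"
proof (rule not_submodular_summI[of "{#0, 1#}" _ "{#0, 0#}"])
  have "{#0, 1#} \<union># {#0, 0#} = {#0, 0, 1::nat#}" "{#0, 1#} \<inter># {#0, 0#} = {#0::nat#}"
    by (simp_all add: multiset_eq_iff)
  then show "frequency 0 {#0, 1#} + frequency 0 {#0, 0#}
      < frequency 0 ({#0, 1#} \<union># {#0, 0#}) + frequency 0 ({#0, 1#} \<inter># {#0, 0#})"
    by (simp add: frequency_def)
qed (simp_all add: example_workload_def multiset_eq_iff subseteq_mset_def)

theorem lemma4p3:
  shows "\<exists>(F :: feature set) (feat :: featfun) (W :: query multiset) d.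
           finite F \<and> W \<noteq> {#} \<and> target_dist F feat W d \<and>
           \<not> monotone_summ W (rho1 F feat W d) \<and> \<not> submodular_summ W (rho1 F feat W d) \<and>
           \<not> monotone_summ W (rhoinf F feat W d) \<and> \<not> submodular_summ W (rhoinf F feat W d)"
proof (intro exI conjI)
  let ?F = "{0}" and ?W = example_workload and ?d = "point_target 0"
  show "finite ?F" "?W \<noteq> {#}"
    by (simp_all add: example_workload_def)
  show "target_dist ?F identity_feature ?W ?d"
    by (rule target_dist_example)
  show "\<not> monotone_summ ?W (rho1 ?F identity_feature ?W ?d)"
    using not_monotone_summ_frequency monotone_summ_cong[OF rho1_example_eq_frequency] by simp
  show "\<not> submodular_summ ?W (rho1 ?F identity_feature ?W ?d)"
    using not_submodular_summ_frequency submodular_summ_cong[OF rho1_example_eq_frequency] by simp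
  show "\<not> monotone_summ ?W (rhoinf ?F identity_feature ?W ?d)"
    using not_monotone_summ_frequency monotone_summ_cong[OF rhoinf_example_eq_frequency] by simp
  show "\<not> submodular_summ ?W (rhoinf ?F identity_feature ?W ?d)"
    using not_submodular_summ_frequency submodular_summ_cong[OF rhoinf_example_eq_frequency]
    by simp
qed

end
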